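(* Let $\mathfrak{G}$ be the Goldman Lie algebra of the closed torus over $\mathbb{Z}$. Then the derived subalgebra $[\mathfrak{G},\mathfrak{G}]$ is the $\mathbb{Z}$-submodule of $\mathfrak{G}$ spanned by the elements $\gcd(i,j)\,a^ib^j$ for $i,j\in\mathbb{Z}\setminus\{0\}$, together with $n\,a^n$ and $n\,b^n$ for $n\in\mathbb{Z}\setminus\{0\}$.
   Context: Let $T^2=\Sigma_{1,0}$ be the closed oriented torus and $\hat\pi$ its set of free homotopy classes of loops, identified with $\pi_1(T^2)\cong\mathbb{Z}^2$; with $a,b$ the standard generators every class is written $a^ib^j$, $(i,j)\in\mathbb{Z}^2$. The Goldman bracket ($[\alpha,\beta]=\sum_{p\in\alpha\cap\beta}\epsilon(p)\,\alpha*_p\beta$ over transverse intersection points $p$, with $\epsilon(p)$ the intersection sign and $\alpha*_p\beta$ the concatenation at $p$, extended bilinearly) is given on the torus by $[a^ib^j,a^kb^l]=(il-jk)\,a^{i+k}b^{j+l}$. The Goldman Lie algebra over $\mathbb{Z}$ is the free abelian group $\mathbb{Z}\hat\pi$ with basis $\hat\pi$ and this bracket, and $[\mathfrak{G},\mathfrak{G}]$ is the $\mathbb{Z}$-span of all brackets. *)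

theory Defs
  imports "HOL-Library.Poly_Mapping"
begin

text \<open>The Goldman Lie algebra of the torus over the integers: the free abelian group
  with basis the free homotopy classes a^i b^j, identified with (i,j) in Z x Z.\<close>

type_synonym goldman = "(int \<times> int) \<Rightarrow>\<^sub>0 int"

definition cls :: "int \<Rightarrow> int \<Rightarrow> goldman" where
  "cls i j = Poly_Mapping.single (i, j) 1"

definition zsmult :: "int \<Rightarrow> goldman \<Rightarrow> goldman" where
  "zsmult c x = Poly_Mapping.map (\<lambda>v. c * v) x"

text \<open>Goldman bracket: bilinear extension of [a^i b^j, a^k b^l] = (il - jk) a^(i+k) b^(j+l).\<close>
definition gbracket :: "goldman \<Rightarrow> goldman \<Rightarrow> goldman" where
  "gbracket x y =
     (\<Sum>p\<in>Poly_Mapping.keys x. \<Sum>q\<in>Poly_Mapping.keys y.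
        Poly_Mapping.single (fst p + fst q, snd p + snd q)
          (Poly_Mapping.lookup x p * Poly_Mapping.lookup y q * (fst p * snd q - snd p * fst q)))"

inductive_set zspan :: "goldman set \<Rightarrow> goldman set" for S where
  zspan_zero: "0 \<in> zspan S"
| zspan_gen: "s \<in> S \<Longrightarrow> s \<in> zspan S"
| zspan_add: "x \<in> zspan S \<Longrightarrow> y \<in> zspan S \<Longrightarrow> x + y \<in> zspan S"
| zspan_diff: "x \<in> zspan S \<Longrightarrow> y \<in> zspan S \<Longrightarrow> x - y \<in> zspan S"

definition derived :: "goldman set" where
  "derived = zspan {gbracket x y | x y. True}"

end

theory Submission
  imports Defs
begin

text \<open>Both sides equal the span of the monomials c a^i b^j with gcd i j dividing c.
  Every bracket is a sum of such monomials, because the coefficient il - jk of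
  [a^i b^j, a^k b^l] equals i(j+l) - j(i+k) and is therefore divisible by gcd (i+k) (j+l).
  Conversely, given a Bezout relation ui + vj = gcd i j, the single bracket
  [a^v b^(-u), c a^(i-v) b^(j+u)] is c gcd(i,j) a^i b^j. Since gcd n 0 = |n|, these monomials
  are spanned by the listed generators.\<close>

lemma zsmult_cls: "zsmult c (cls i j) = Poly_Mapping.single (i, j) c"
  unfolding zsmult_def cls_def by simp

lemma gbracket_single:
  "gbracket (Poly_Mapping.single (i, j) c) (Poly_Mapping.single (k, l) d)
     = Poly_Mapping.single (i + k, j + l) (c * d * (i * l - j * k))"
  unfolding gbracket_def by simp

lemma gcd_add_dvd_det: "gcd (i + k) (j + l) dvd (i * l - j * k :: int)"
proof -
  have "i * l - j * k = i * (j + l) - j * (i + k)"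
    by (simp add: algebra_simps)
  then show ?thesis
    by simp
qed

lemma zspan_subset_zspan: "S \<subseteq> zspan T \<Longrightarrow> zspan S \<subseteq> zspan T"
proof
  fix x assume "x \<in> zspan S" "S \<subseteq> zspan T"
  then show "x \<in> zspan T"
    by (induction x rule: zspan.induct) (auto intro: zspan.intros)
qed

lemma zspan_mono: "S \<subseteq> T \<Longrightarrow> zspan S \<subseteq> zspan T"
  by (rule zspan_subset_zspan) (auto intro: zspan.zspan_gen)

lemma zspan_sum: "(\<And>a. a \<in> A \<Longrightarrow> f a \<in> zspan S) \<Longrightarrow> sum f A \<in> zspan S"
  by (induction A rule: infinite_finite_induct) (auto intro: zspan.intros)

lemma zspan_single_mult:
  assumes "Poly_Mapping.single p g \<in> zspan S"
  shows "Poly_Mapping.single p (k * g) \<in> zspan S"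
proof (induction k rule: int_induct[where k = 0])
  case base
  then show ?case by (simp add: zspan.zspan_zero)
next
  case (step1 k)
  have "Poly_Mapping.single p ((k + 1) * g) = Poly_Mapping.single p (k * g) + Poly_Mapping.single p g"
    by (simp add: single_add[symmetric] algebra_simps)
  then show ?case using step1 assms by (simp add: zspan.zspan_add)
next
  case (step2 k)
  have "Poly_Mapping.single p ((k - 1) * g) = Poly_Mapping.single p (k * g) - Poly_Mapping.single p g"
    by (simp add: single_diff[symmetric] algebra_simps)
  then show ?case using step2 assms by (simp add: zspan.zspan_diff)
qed

definition gcd_monomials :: "goldman set" where
  "gcd_monomials = {Poly_Mapping.single (i, j) c | i j c. gcd i j dvd c}"

lemma gbracket_in_zspan_gcd_monomials: "gbracket x y \<in> zspan gcd_monomials"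
  unfolding gbracket_def
proof (intro zspan_sum zspan.zspan_gen)
  fix p q :: "int \<times> int"
  have "gcd (fst p + fst q) (snd p + snd q)
          dvd Poly_Mapping.lookup x p * Poly_Mapping.lookup y q * (fst p * snd q - snd p * fst q)"
    using gcd_add_dvd_det by (rule dvd_mult)
  then show "Poly_Mapping.single (fst p + fst q, snd p + snd q)
      (Poly_Mapping.lookup x p * Poly_Mapping.lookup y q * (fst p * snd q - snd p * fst q))
        \<in> gcd_monomials"
    unfolding gcd_monomials_def by blast
qed

lemma gcd_monomial_is_gbracket:
  assumes "gcd i j dvd c"
  shows "\<exists>x y. Poly_Mapping.single (i, j) c = gbracket x y"
proof -
  obtain k where k: "c = gcd i j * k"
    using assms by (rule dvdE)
  obtain u v where uv: "u * i + v * j = gcd i j"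
    using bezout_int by blast
  have "gbracket (Poly_Mapping.single (v, - u) 1) (Poly_Mapping.single (i - v, j + u) k)
          = Poly_Mapping.single (i, j) c"
    unfolding gbracket_single k uv[symmetric] by (simp add: algebra_simps)
  then show ?thesis
    by metis
qed

lemma derived_eq_zspan_gcd_monomials: "derived = zspan gcd_monomials"
proof
  show "derived \<subseteq> zspan gcd_monomials"
    unfolding derived_def
    by (rule zspan_subset_zspan) (auto intro: gbracket_in_zspan_gcd_monomials)
  have "gcd_monomials \<subseteq> {gbracket x y | x y. True}"
    unfolding gcd_monomials_def using gcd_monomial_is_gbracket by blast
  then show "zspan gcd_monomials \<subseteq> derived"
    unfolding derived_def by (rule zspan_mono)
qed

lemma gcd_monomial_in_zspan_generators:
  fixes G :: "goldman set"
  assumes gen: "\<And>i j. i \<noteq> 0 \<Longrightarrow> j \<noteq> 0 \<Longrightarrow> Poly_Mapping.single (i, j) (gcd i j) \<in> G"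
    "\<And>n. n \<noteq> 0 \<Longrightarrow> Poly_Mapping.single (n, 0) n \<in> G"
    "\<And>n. n \<noteq> 0 \<Longrightarrow> Poly_Mapping.single (0, n) n \<in> G"
    and dvd: "gcd i j dvd c"
  shows "Poly_Mapping.single (i, j) c \<in> zspan G"
proof -
  obtain k where k: "c = k * gcd i j"
    using dvd by (metis dvdE mult.commute)
  consider "i \<noteq> 0" "j \<noteq> 0" | "j = 0" "i \<noteq> 0" | "i = 0" "j \<noteq> 0" | "i = 0" "j = 0"
    by blast
  then show ?thesis
  proof cases
    case 1
    then show ?thesis
      using zspan_single_mult[OF zspan.zspan_gen[OF gen(1)]] k by simp
  next
    case 2
    then have "c = sgn i * k * i"
      using k by (simp add: abs_sgn mult.commute mult.left_commute)
    then show ?thesis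
      using 2 zspan_single_mult[OF zspan.zspan_gen[OF gen(2)]] by simp
  next
    case 3
    then have "c = sgn j * k * j"
      using k by (simp add: abs_sgn mult.commute mult.left_commute)
    then show ?thesis
      using 3 zspan_single_mult[OF zspan.zspan_gen[OF gen(3)]] by simp
  next
    case 4
    then show ?thesis
      using k by (simp add: zspan.zspan_zero)
  qed
qed

theorem mainTheorem4:
  shows "derived =
    zspan ({zsmult (gcd i j) (cls i j) | i j. i \<noteq> 0 \<and> j \<noteq> 0}
         \<union> {zsmult n (cls n 0) | n. n \<noteq> 0}
         \<union> {zsmult n (cls 0 n) | n. n \<noteq> 0})" (is "_ = zspan ?G")
proof -
  have "zspan gcd_monomials \<subseteq> zspan ?G"
    unfolding gcd_monomials_def
    by (rule zspan_subset_zspan)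
      (auto intro!: gcd_monomial_in_zspan_generators simp: zsmult_cls)
  moreover have "?G \<subseteq> gcd_monomials"
    unfolding gcd_monomials_def by (force simp: zsmult_cls)
  then have "zspan ?G \<subseteq> zspan gcd_monomials"
    by (rule zspan_mono)
  ultimately show ?thesis
    using derived_eq_zspan_gcd_monomials by blast
qed

end
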